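(* Let $m\geq 2$, $\mathcal M=\{1,\dots,m\}$, $X_{\mathcal M}=(X_1,\dots,X_m)$ a discrete memoryless multiple source with finite alphabets, and $\mathcal A\subseteq\mathcal M$ with $|\mathcal A|\geq 2$. For every $R_{\mathcal M}\in\mathscr R(\mathcal A)$ and all $\mathcal B_1,\mathcal B_2\subseteq\mathcal M$ with $\mathcal B_1\cup\mathcal B_2\in\mathscr B(\mathcal A)$: if $\mathrm{SW}(R_{\mathcal M},\mathcal B_1)=0$ and $\mathrm{SW}(R_{\mathcal M},\mathcal B_2)=0$, then $\mathrm{SW}(R_{\mathcal M},\mathcal B_1\cup\mathcal B_2)=0$ and $\mathrm{SW}(R_{\mathcal M},\mathcal B_1\cap\mathcal B_2)=0$.
   Context: Define $\mathscr B(\mathcal A):=\{\mathcal B\subsetneq\mathcal M:\ \mathcal B\neq\emptyset,\ \mathcal B\not\supseteq\mathcal A\}$. Let $h(\mathcal B):=H(X_{\mathcal B}\mid X_{\mathcal B^c})$ for $\mathcal B\subseteq\mathcal M$ (complements in $\mathcal M$; in particular $h(\emptyset)=0$). For $R_{\mathcal M}=(R_1,\dots,R_m)\in\mathbb R^m$ and $\mathcal B\subseteq\mathcal M$ let $\mathrm{SW}(R_{\mathcal M},\mathcal B):=\sum_{j\in\mathcal B}R_j-h(\mathcal B)$, and $\mathscr R(\mathcal A):=\{R_{\mathcal M}\in\mathbb R^m:\ \mathrm{SW}(R_{\mathcal M},\mathcal B)\geq 0\ \forall\,\mathcal B\in\mathscr B(\mathcal A)\}$. *)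

theory Defs
  imports "HOL-Probability.Probability"
begin

text \<open>A single-letter joint distribution of the source (X_1,...,X_m): a pmf on
 functions nat => 'a (only coordinates in {1..m} are used); 'a is a finite alphabet.\<close>

definition marg :: "(nat \<Rightarrow> 'a) pmf \<Rightarrow> nat set \<Rightarrow> (nat \<Rightarrow> 'a) pmf" where
  "marg P S = map_pmf (\<lambda>x. restrict x S) P"

definition cond_entropy :: "(nat \<Rightarrow> 'a) pmf \<Rightarrow> nat set \<Rightarrow> nat set \<Rightarrow> real" where
  "cond_entropy P B C =
     (let J = map_pmf (\<lambda>x. (restrict x B, restrict x C)) P in
      - (\<Sum>z\<in>set_pmf J. pmf J z * log 2 (pmf J z / pmf (marg P C) (snd z))))"

definition hfun :: "(nat \<Rightarrow> 'a) pmf \<Rightarrow> nat \<Rightarrow> nat set \<Rightarrow> real" where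
  "hfun P m B = cond_entropy P B ({1..m} - B)"

definition SW :: "(nat \<Rightarrow> 'a) pmf \<Rightarrow> nat \<Rightarrow> (nat \<Rightarrow> real) \<Rightarrow> nat set \<Rightarrow> real" where
  "SW P m R B = (\<Sum>j\<in>B. R j) - hfun P m B"

definition Bfam :: "nat \<Rightarrow> nat set \<Rightarrow> nat set set" where
  "Bfam m A = {B. B \<subset> {1..m} \<and> B \<noteq> {} \<and> \<not> A \<subseteq> B}"

definition Rregion :: "(nat \<Rightarrow> 'a) pmf \<Rightarrow> nat \<Rightarrow> nat set \<Rightarrow> (nat \<Rightarrow> real) set" where
  "Rregion P m A = {R. \<forall>B\<in>Bfam m A. SW P m R B \<ge> 0}"

end

theory Submission
  imports Defs
begin

text \<open>Writing \<open>H(S)\<close> for the joint entropy of \<open>X\<^sub>S\<close>, the chain rule gives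
  \<open>h(B) = H(\<M>) - H(\<M> - B)\<close>. Joint entropy is submodular (the expected value of
  \<open>log (p\<^sub>S\<^sub>\<union>\<^sub>T p\<^sub>S\<^sub>\<inter>\<^sub>T / (p\<^sub>S p\<^sub>T))\<close> is nonnegative by \<open>ln t \<le> t - 1\<close>), so \<open>h\<close> is supermodular
  and \<open>SW(R, -)\<close>, a modular function minus \<open>h\<close>, is submodular. Hence
  \<open>SW(B\<^sub>1 \<union> B\<^sub>2) + SW(B\<^sub>1 \<inter> B\<^sub>2) \<le> SW(B\<^sub>1) + SW(B\<^sub>2) = 0\<close>, while both terms on the left
  are nonnegative: \<open>B\<^sub>1 \<union> B\<^sub>2\<close> and a nonempty \<open>B\<^sub>1 \<inter> B\<^sub>2\<close> lie in \<open>\<B>(\<A>)\<close>, and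
  \<open>SW(\<emptyset>) = 0\<close>.\<close>

lemma finite_range_restrict:
  "finite S \<Longrightarrow> finite (range (\<lambda>x::'i \<Rightarrow> 'a::finite. restrict x S))"
  by (rule finite_subset[of _ "PiE S (\<lambda>_. UNIV)"]) (auto simp: finite_PiE)

lemma integrable_measure_pmf_finite_range:
  assumes "finite (range g)"
  shows "integrable (measure_pmf P) (\<lambda>x. (F (g x) :: real))"
proof -
  have "finite (set_pmf (map_pmf g P))"
    using assms by (rule finite_subset[rotated]) auto
  then have "integrable (measure_pmf (map_pmf g P)) F"
    by (rule integrable_measure_pmf_finite)
  then show ?thesis by (simp add: map_pmf_rep_eq integrable_distr_eq)
qed

lemma sum_map_pmf_eq_expectation:
  assumes "finite (range g)"
  shows "(\<Sum>z\<in>set_pmf (map_pmf g P). pmf (map_pmf g P) z * F z)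
    = measure_pmf.expectation P (\<lambda>x. (F (g x) :: real))"
proof -
  have "finite (set_pmf (map_pmf g P))"
    using assms by (rule finite_subset[rotated]) auto
  then have "measure_pmf.expectation (map_pmf g P) F
      = (\<Sum>z\<in>set_pmf (map_pmf g P). F z * pmf (map_pmf g P) z)"
    by (rule integral_measure_pmf_real) auto
  then show ?thesis by (simp add: mult.commute)
qed

lemma pmf_map_pmf_cong:
  assumes "\<And>x x'. f x = f x' \<longleftrightarrow> g x = g x'"
  shows "pmf (map_pmf f P) (f x) = pmf (map_pmf g P) (g x)"
proof -
  have "f -` {f x} = g -` {g x}" using assms by auto
  then show ?thesis by (simp add: pmf_map)
qed

lemma restrict_eq_iff: "restrict x S = restrict y S \<longleftrightarrow> (\<forall>i\<in>S. x i = y i)"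
  by (auto simp: fun_eq_iff restrict_def)

lemma inj_on_restrict_pair: "inj_on (\<lambda>u. (restrict u S, restrict u T)) (extensional (S \<union> T))"
proof (rule inj_onI, rule ext)
  fix u v i
  assume "u \<in> extensional (S \<union> T)" "v \<in> extensional (S \<union> T)"
    and "(restrict u S, restrict u T) = (restrict v S, restrict v T)"
  then show "u i = v i"
    by (cases "i \<in> S \<union> T") (auto simp: restrict_eq_iff extensional_def)
qed

lemma set_pmf_marg_extensional: "set_pmf (marg P S) \<subseteq> extensional S"
  by (auto simp: marg_def)

lemma finite_set_pmf_marg: "finite S \<Longrightarrow> finite (set_pmf (marg (P :: (nat \<Rightarrow> 'a::finite) pmf) S))"
  unfolding marg_def using finite_range_restrict[of S] by (auto intro: finite_subset[OF image_mono])

lemma pmf_marg_pos: "x \<in> set_pmf P \<Longrightarrow> pmf (marg P S) (restrict x S) > 0"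
  unfolding marg_def by (rule pmf_positive) auto

lemma marg_marg: "I \<subseteq> T \<Longrightarrow> marg (marg P T) I = marg P I"
  unfolding marg_def map_pmf_comp by (simp add: Int_absorb1)

lemma pmf_marg_eq_sum_fibre:
  fixes P :: "(nat \<Rightarrow> 'a::finite) pmf"
  assumes "finite T" and "I \<subseteq> T"
  shows "pmf (marg P I) c = (\<Sum>t\<in>{t\<in>set_pmf (marg P T). restrict t I = c}. pmf (marg P T) t)"
proof -
  have "pmf (marg P I) c = pmf (marg (marg P T) I) c"
    by (simp add: marg_marg[OF assms(2)])
  also have "\<dots> = measure (marg P T) ((\<lambda>t. restrict t I) -` {c} \<inter> set_pmf (marg P T))"
    by (simp add: marg_def[of "marg P T"] pmf_map measure_Int_set_pmf)
  also have "(\<lambda>t. restrict t I) -` {c} \<inter> set_pmf (marg P T) = {t\<in>set_pmf (marg P T). restrict t I = c}"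
    by auto
  also have "measure (marg P T) \<dots> = (\<Sum>t\<in>{t\<in>set_pmf (marg P T). restrict t I = c}. pmf (marg P T) t)"
    using finite_set_pmf_marg[OF assms(1), of P] by (intro measure_measure_pmf_finite) auto
  finally show ?thesis .
qed

definition joint_entropy :: "(nat \<Rightarrow> 'a) pmf \<Rightarrow> nat set \<Rightarrow> real" where
  "joint_entropy P S = - measure_pmf.expectation P (\<lambda>x. log 2 (pmf (marg P S) (restrict x S)))"

lemma integrable_log_pmf_marg:
  fixes P :: "(nat \<Rightarrow> 'a::finite) pmf"
  shows "finite S \<Longrightarrow> integrable (measure_pmf P) (\<lambda>x. log 2 (pmf (marg P S) (restrict x S)))"
  by (rule integrable_measure_pmf_finite_range[OF finite_range_restrict])

lemma cond_entropy_eq_joint_entropy_diff: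
  fixes P :: "(nat \<Rightarrow> 'a::finite) pmf"
  assumes "finite B" and "finite C" and "B \<inter> C = {}"
  shows "cond_entropy P B C = joint_entropy P (B \<union> C) - joint_entropy P C"
proof -
  define j where "j = (\<lambda>x::nat \<Rightarrow> 'a. (restrict x B, restrict x C))"
  define J where "J = map_pmf j P"
  have "range j \<subseteq> range (\<lambda>x::nat \<Rightarrow> 'a. restrict x B) \<times> range (\<lambda>x::nat \<Rightarrow> 'a. restrict x C)"
    unfolding j_def by auto
  then have finite_j: "finite (range j)"
    using finite_range_restrict[OF assms(1)] finite_range_restrict[OF assms(2)]
    by (blast intro: finite_subset)
  have "cond_entropy P B C
      = - measure_pmf.expectation P (\<lambda>x. log 2 (pmf J (j x) / pmf (marg P C) (snd (j x))))"
    unfolding cond_entropy_def Let_def j_def[symmetric] J_def[symmetric]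
    by (subst sum_map_pmf_eq_expectation[OF finite_j, symmetric]) (simp add: J_def)
  also have "\<dots> = - measure_pmf.expectation P (\<lambda>x. log 2 (pmf (marg P (B \<union> C)) (restrict x (B \<union> C)))
      - log 2 (pmf (marg P C) (restrict x C)))"
  proof (intro arg_cong[where f = uminus] integral_cong_AE)
    have pmf_J: "pmf J (j x) = pmf (marg P (B \<union> C)) (restrict x (B \<union> C))" for x
      unfolding J_def marg_def by (rule pmf_map_pmf_cong) (auto simp: j_def restrict_eq_iff)
    show "AE x in measure_pmf P. log 2 (pmf J (j x) / pmf (marg P C) (snd (j x)))
        = log 2 (pmf (marg P (B \<union> C)) (restrict x (B \<union> C))) - log 2 (pmf (marg P C) (restrict x C))"
      unfolding AE_measure_pmf_iff
    proof
      fix x assume "x \<in> set_pmf P"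
      moreover have "snd (j x) = restrict x C" by (simp add: j_def)
      ultimately show "log 2 (pmf J (j x) / pmf (marg P C) (snd (j x)))
          = log 2 (pmf (marg P (B \<union> C)) (restrict x (B \<union> C))) - log 2 (pmf (marg P C) (restrict x C))"
        using pmf_marg_pos[of x P C] pmf_marg_pos[of x P "B \<union> C"] by (simp add: pmf_J log_divide)
    qed
  qed auto
  also have "\<dots> = joint_entropy P (B \<union> C) - joint_entropy P C"
    unfolding joint_entropy_def using assms
    by (subst Bochner_Integration.integral_diff) (auto intro: integrable_log_pmf_marg)
  finally show ?thesis .
qed

lemma sum_compatible_pairs_marg_ratio:
  fixes P :: "(nat \<Rightarrow> 'a::finite) pmf"
  assumes "finite S" and "finite T"
  defines "I \<equiv> S \<inter> T"
  shows "(\<Sum>s\<in>set_pmf (marg P S). \<Sum>t\<in>{t\<in>set_pmf (marg P T). restrict t I = restrict s I}.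
      pmf (marg P S) s * pmf (marg P T) t / pmf (marg P I) (restrict s I)) = 1"
proof -
  have "(\<Sum>s\<in>set_pmf (marg P S). \<Sum>t\<in>{t\<in>set_pmf (marg P T). restrict t I = restrict s I}.
      pmf (marg P S) s * pmf (marg P T) t / pmf (marg P I) (restrict s I))
    = (\<Sum>s\<in>set_pmf (marg P S). pmf (marg P S) s)"
  proof (rule sum.cong[OF refl])
    fix s assume "s \<in> set_pmf (marg P S)"
    then obtain x where "x \<in> set_pmf P" "s = restrict x S" by (auto simp: marg_def)
    then have pos: "pmf (marg P I) (restrict s I) > 0"
      using pmf_marg_pos[of x P I] by (simp add: I_def Int_absorb1)
    have "(\<Sum>t\<in>{t\<in>set_pmf (marg P T). restrict t I = restrict s I}.
        pmf (marg P S) s * pmf (marg P T) t / pmf (marg P I) (restrict s I))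
      = pmf (marg P S) s / pmf (marg P I) (restrict s I)
        * (\<Sum>t\<in>{t\<in>set_pmf (marg P T). restrict t I = restrict s I}. pmf (marg P T) t)"
      by (simp add: sum_distrib_left)
    also have "\<dots> = pmf (marg P S) s / pmf (marg P I) (restrict s I) * pmf (marg P I) (restrict s I)"
      using pmf_marg_eq_sum_fibre[OF assms(2), of I P] by (simp add: I_def)
    also have "\<dots> = pmf (marg P S) s"
      using pos by simp
    finally show "(\<Sum>t\<in>{t\<in>set_pmf (marg P T). restrict t I = restrict s I}.
        pmf (marg P S) s * pmf (marg P T) t / pmf (marg P I) (restrict s I)) = pmf (marg P S) s" .
  qed
  also have "\<dots> = 1"
    using finite_set_pmf_marg[OF assms(1), of P] by (intro sum_pmf_eq_1) auto
  finally show ?thesis .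
qed

lemma sum_marg_ratio_le_1:
  fixes P :: "(nat \<Rightarrow> 'a::finite) pmf"
  assumes "finite S" and "finite T"
  shows "(\<Sum>u\<in>set_pmf (marg P (S \<union> T)). pmf (marg P S) (restrict u S) * pmf (marg P T) (restrict u T)
           / pmf (marg P (S \<inter> T)) (restrict u (S \<inter> T))) \<le> 1"
proof -
  define I where "I = S \<inter> T"
  define k where "k = (\<lambda>u::nat \<Rightarrow> 'a. (restrict u S, restrict u T))"
  define F where "F = (\<lambda>(s, t). pmf (marg P S) s * pmf (marg P T) t / pmf (marg P I) (restrict s I))"
  define D where "D = (SIGMA s:set_pmf (marg P S). {t\<in>set_pmf (marg P T). restrict t I = restrict s I})"
  have inj_k: "inj_on k (set_pmf (marg P (S \<union> T)))"
    unfolding k_def using inj_on_restrict_pair set_pmf_marg_extensional by (rule inj_on_subset)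
  have I_sub: "S \<inter> I = I" "T \<inter> I = I" "(S \<union> T) \<inter> S = S" "(S \<union> T) \<inter> T = T"
    by (auto simp: I_def)
  have k_D: "k ` set_pmf (marg P (S \<union> T)) \<subseteq> D"
    by (auto simp: k_def D_def marg_def I_sub)
  have finite_fibres: "\<forall>s\<in>set_pmf (marg P S). finite {t\<in>set_pmf (marg P T). restrict t I = restrict s I}"
    using finite_set_pmf_marg[OF assms(2), of P] by auto
  have "finite D"
    unfolding D_def using finite_set_pmf_marg[OF assms(1), of P] finite_fibres by (intro finite_SigmaI) auto
  have "(\<Sum>u\<in>set_pmf (marg P (S \<union> T)). F (k u)) = (\<Sum>w\<in>k ` set_pmf (marg P (S \<union> T)). F w)"
    using inj_k by (simp add: sum.reindex)
  also have "\<dots> \<le> (\<Sum>w\<in>D. F w)"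
    using \<open>finite D\<close> k_D by (rule sum_mono2) (auto simp: F_def)
  also have "\<dots> = (\<Sum>s\<in>set_pmf (marg P S). \<Sum>t\<in>{t\<in>set_pmf (marg P T). restrict t I = restrict s I}. F (s, t))"
    unfolding D_def using finite_set_pmf_marg[OF assms(1), of P] finite_fibres
    by (subst sum.Sigma) (auto simp: case_prod_beta')
  also have "\<dots> = 1"
    unfolding F_def I_def using assms by (simp add: sum_compatible_pairs_marg_ratio)
  finally show ?thesis
    by (simp add: F_def k_def I_sub flip: I_def)
qed

lemma one_minus_ratio_le_log_diff:
  fixes a b :: real
  assumes "a > 0" and "b > 0"
  shows "(1 - a / b) / ln 2 \<le> log 2 b - log 2 a"
proof -
  have "ln (a / b) \<le> a / b - 1"
    using assms by (intro ln_le_minus_one) simp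
  then have "1 - a / b \<le> ln b - ln a"
    using assms by (simp add: ln_div)
  then show ?thesis
    by (simp add: log_def divide_right_mono diff_divide_distrib[symmetric])
qed

lemma expectation_marg_ratio_le_1:
  fixes P :: "(nat \<Rightarrow> 'a::finite) pmf"
  assumes "finite S" and "finite T"
  defines "p \<equiv> \<lambda>A x. pmf (marg P A) (restrict x A)"
  shows "measure_pmf.expectation P (\<lambda>x. p S x * p T x / (p (S \<union> T) x * p (S \<inter> T) x)) \<le> 1"
proof -
  define U where "U = S \<union> T"
  define G where "G = (\<lambda>u::nat \<Rightarrow> 'a. pmf (marg P S) (restrict u S) * pmf (marg P T) (restrict u T)
      / (pmf (marg P U) u * pmf (marg P (S \<inter> T)) (restrict u (S \<inter> T))))"
  have "measure_pmf.expectation P (\<lambda>x. p S x * p T x / (p (S \<union> T) x * p (S \<inter> T) x))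
      = measure_pmf.expectation P (\<lambda>x. G (restrict x U))"
    by (simp add: p_def G_def U_def Int_absorb1 Int_assoc[symmetric])
  also have "\<dots> = (\<Sum>u\<in>set_pmf (marg P U). pmf (marg P U) u * G u)"
    unfolding marg_def using assms(1,2)
    by (intro sum_map_pmf_eq_expectation[symmetric] finite_range_restrict) (simp add: U_def)
  also have "\<dots> = (\<Sum>u\<in>set_pmf (marg P (S \<union> T)). pmf (marg P S) (restrict u S)
      * pmf (marg P T) (restrict u T) / pmf (marg P (S \<inter> T)) (restrict u (S \<inter> T)))"
    unfolding U_def G_def by (intro sum.cong refl) (auto simp: set_pmf_iff)
  also have "\<dots> \<le> 1"
    using assms(1,2) by (rule sum_marg_ratio_le_1)
  finally show ?thesis .
qed

lemma joint_entropy_submodular: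
  fixes P :: "(nat \<Rightarrow> 'a::finite) pmf"
  assumes "finite S" and "finite T"
  shows "joint_entropy P (S \<union> T) + joint_entropy P (S \<inter> T) \<le> joint_entropy P S + joint_entropy P T"
proof -
  define U where "U = S \<union> T"
  define I where "I = S \<inter> T"
  have finite_sets: "finite S" "finite T" "finite U" "finite I"
    using assms by (auto simp: U_def I_def)
  define p where "p = (\<lambda>A x. pmf (marg P A) (restrict x A))"
  define L where "L = (\<lambda>x. log 2 (p U x) + log 2 (p I x) - log 2 (p S x) - log 2 (p T x))"
  define G where "G = (\<lambda>x. p S x * p T x / (p U x * p I x))"
  have integrable_G: "integrable (measure_pmf P) G"
    using integrable_measure_pmf_finite_range[OF finite_range_restrict[OF \<open>finite U\<close>],
        of P "\<lambda>u. pmf (marg P S) (restrict u S) * pmf (marg P T) (restrict u T)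
          / (pmf (marg P U) u * pmf (marg P I) (restrict u I))"]
    by (simp add: G_def p_def U_def I_def Int_absorb1 Int_assoc[symmetric])
  have integrable_L: "integrable (measure_pmf P) L"
    unfolding L_def p_def using integrable_log_pmf_marg[of _ P] finite_sets by simp
  have G_L: "(1 - G x) / ln 2 \<le> L x" if "x \<in> set_pmf P" for x
  proof -
    have pos: "p S x > 0" "p T x > 0" "p U x > 0" "p I x > 0"
      unfolding p_def using that by (simp_all add: pmf_marg_pos)
    then have "(1 - (p S x * p T x) / (p U x * p I x)) / ln 2
        \<le> log 2 (p U x * p I x) - log 2 (p S x * p T x)"
      by (intro one_minus_ratio_le_log_diff) simp_all
    then show ?thesis
      using pos by (simp add: G_def L_def log_mult)
  qed
  have "(1 - measure_pmf.expectation P G) / ln 2 = measure_pmf.expectation P (\<lambda>x. (1 - G x) / ln 2)"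
    using integrable_G by simp
  also have "\<dots> \<le> measure_pmf.expectation P L"
    using integrable_G integrable_L G_L
    by (intro integral_mono_AE) (auto simp: AE_measure_pmf_iff)
  also have "\<dots> = joint_entropy P S + joint_entropy P T - joint_entropy P U - joint_entropy P I"
    unfolding L_def p_def joint_entropy_def
    using integrable_log_pmf_marg[of _ P] finite_sets by simp
  finally have "(1 - measure_pmf.expectation P G) / ln 2
      \<le> joint_entropy P S + joint_entropy P T - joint_entropy P U - joint_entropy P I" .
  moreover have "measure_pmf.expectation P G \<le> 1"
    unfolding G_def p_def U_def I_def using assms by (rule expectation_marg_ratio_le_1)
  ultimately show ?thesis
    unfolding U_def I_def by (smt (verit) divide_nonneg_pos ln_gt_zero)
qed

lemma hfun_eq_joint_entropy_diff:
  fixes P :: "(nat \<Rightarrow> 'a::finite) pmf"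
  assumes "B \<subseteq> {1..m}"
  shows "hfun P m B = joint_entropy P {1..m} - joint_entropy P ({1..m} - B)"
proof -
  have "hfun P m B = joint_entropy P (B \<union> ({1..m} - B)) - joint_entropy P ({1..m} - B)"
    unfolding hfun_def using assms finite_subset
    by (intro cond_entropy_eq_joint_entropy_diff) auto
  also have "B \<union> ({1..m} - B) = {1..m}" using assms by auto
  finally show ?thesis .
qed

lemma hfun_supermodular:
  fixes P :: "(nat \<Rightarrow> 'a::finite) pmf"
  assumes "B1 \<subseteq> {1..m}" and "B2 \<subseteq> {1..m}"
  shows "hfun P m B1 + hfun P m B2 \<le> hfun P m (B1 \<union> B2) + hfun P m (B1 \<inter> B2)"
proof -
  have "joint_entropy P (({1..m} - B1) \<union> ({1..m} - B2)) + joint_entropy P (({1..m} - B1) \<inter> ({1..m} - B2))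
      \<le> joint_entropy P ({1..m} - B1) + joint_entropy P ({1..m} - B2)"
    by (rule joint_entropy_submodular) auto
  moreover have "({1..m} - B1) \<union> ({1..m} - B2) = {1..m} - (B1 \<inter> B2)"
    and "({1..m} - B1) \<inter> ({1..m} - B2) = {1..m} - (B1 \<union> B2)"
    by auto
  ultimately show ?thesis
    using assms by (simp add: hfun_eq_joint_entropy_diff le_infI1)
qed

lemma SW_submodular:
  fixes P :: "(nat \<Rightarrow> 'a::finite) pmf"
  assumes "B1 \<subseteq> {1..m}" and "B2 \<subseteq> {1..m}"
  shows "SW P m R (B1 \<union> B2) + SW P m R (B1 \<inter> B2) \<le> SW P m R B1 + SW P m R B2"
proof -
  have "sum R (B1 \<union> B2) + sum R (B1 \<inter> B2) = sum R B1 + sum R B2"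
    using assms finite_subset by (intro sum.union_inter) auto
  then show ?thesis
    using hfun_supermodular[OF assms, of P] unfolding SW_def by linarith
qed

lemma SW_empty: "SW (P :: (nat \<Rightarrow> 'a::finite) pmf) m R {} = 0"
  by (simp add: SW_def hfun_eq_joint_entropy_diff)

theorem proposition2:
  fixes P :: "(nat \<Rightarrow> 'a::finite) pmf" and m :: nat and A B1 B2 :: "nat set"
    and R :: "nat \<Rightarrow> real"
  assumes "m \<ge> 2"
    and "A \<subseteq> {1..m}" and "card A \<ge> 2"
    and "R \<in> Rregion P m A"
    and "B1 \<subseteq> {1..m}" and "B2 \<subseteq> {1..m}"
    and "B1 \<union> B2 \<in> Bfam m A"
    and "SW P m R B1 = 0" and "SW P m R B2 = 0"
  shows "SW P m R (B1 \<union> B2) = 0 \<and> SW P m R (B1 \<inter> B2) = 0"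
proof -
  have "SW P m R (B1 \<union> B2) + SW P m R (B1 \<inter> B2) \<le> 0"
    using SW_submodular[OF assms(5,6), where P = P and R = R] assms(8,9) by simp
  moreover have "SW P m R (B1 \<union> B2) \<ge> 0"
    using assms(4,7) unfolding Rregion_def by blast
  moreover have "SW P m R (B1 \<inter> B2) \<ge> 0"
  proof (cases "B1 \<inter> B2 = {}")
    case True
    then show ?thesis by (simp add: SW_empty)
  next
    case False
    then have "B1 \<inter> B2 \<in> Bfam m A" using assms(7) unfolding Bfam_def by blast
    then show ?thesis using assms(4) unfolding Rregion_def by blast
  qed
  ultimately show ?thesis by linarith
qed

end
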